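(* Consider the network Polya contagion process on the complete graph on $N$ nodes with $\Delta_{r,i}(t)=\Delta_{b,i}(t)=\Delta>0$ for all nodes $i$ and times $t$. Let $\rho=\frac{\sum_{k=1}^N R_k}{\sum_{k=1}^N T_k}$. Then for every node $i$, every $n\ge 1$ and every $a\in\{0,1\}$, \[ P(Z_{i,n}=a)=\rho^a(1-\rho)^{1-a}. \]
   Context: Network Polya contagion process: $\mathcal{G}=(V,\mathcal{E})$ is a connected undirected graph, $V=\{1,\dots,N\}$, $\mathcal{N}_i'=\{i\}\cup\{v:(i,v)\in\mathcal{E}\}$; the complete graph has $\mathcal{N}_i'=V$ for all $i$. Each node $i$ has an urn initially containing $R_i\in\mathbb{Z}_{>0}$ red and $B_i\in\mathbb{Z}_{>0}$ black balls, $T_i=R_i+B_i$. The super urn of node $i$ is the union of the urns of nodes in $\mathcal{N}_i'$. At each time $t=1,2,\dots$ every node $i$ simultaneously draws from its super urn; $Z_{i,t}=1$ if red, $0$ if black; then $\Delta_{r,i}(t)$ red balls (if red drawn) or $\Delta_{b,i}(t)$ black balls (if black drawn) are added to node $i$'s own urn. Given the whole history, the time-$n$ draws are conditionally independent with $P(Z_{i,n}=1\mid\{Z_j^{n-1}\}_{j=1}^N)=\dfrac{\sum_{j\in\mathcal{N}_i'}\big(R_j+\sum_{t=1}^{n-1}Z_{j,t}\Delta_{r,j}(t)\big)}{\sum_{j\in\mathcal{N}_i'}\big(T_j+\sum_{t=1}^{n-1}(Z_{j,t}\Delta_{r,j}(t)+(1-Z_{j,t})\Delta_{b,j}(t))\big)}$.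 *)

theory Defs
  imports "HOL-Probability.Probability"
begin

text \<open>Nb i is the closed neighbourhood N'_i of node i.
  A history of length m is a list h of draw vectors; h ! (t-1) j is Z_{j,t}
  (True = red).  Drawing-scheme increments: Dr j t and Db j t (time t \<ge> 1).\<close>

definition red_balls ::
  "(nat \<Rightarrow> nat) \<Rightarrow> (nat \<Rightarrow> nat \<Rightarrow> real) \<Rightarrow> (nat \<Rightarrow> bool) list \<Rightarrow> nat \<Rightarrow> real" where
  "red_balls R Dr h j =
     real (R j) + (\<Sum>t<length h. if (h ! t) j then Dr j (Suc t) else 0)"

definition total_balls ::
  "(nat \<Rightarrow> nat) \<Rightarrow> (nat \<Rightarrow> nat) \<Rightarrow> (nat \<Rightarrow> nat \<Rightarrow> real) \<Rightarrow> (nat \<Rightarrow> nat \<Rightarrow> real)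
     \<Rightarrow> (nat \<Rightarrow> bool) list \<Rightarrow> nat \<Rightarrow> real" where
  "total_balls R B Dr Db h j =
     real (R j + B j) + (\<Sum>t<length h. if (h ! t) j then Dr j (Suc t) else Db j (Suc t))"

definition red_prob ::
  "(nat \<Rightarrow> nat set) \<Rightarrow> (nat \<Rightarrow> nat) \<Rightarrow> (nat \<Rightarrow> nat) \<Rightarrow> (nat \<Rightarrow> nat \<Rightarrow> real)
     \<Rightarrow> (nat \<Rightarrow> nat \<Rightarrow> real) \<Rightarrow> (nat \<Rightarrow> bool) list \<Rightarrow> nat \<Rightarrow> real" where
  "red_prob Nb R B Dr Db h i =
     (\<Sum>j\<in>Nb i. red_balls R Dr h j) / (\<Sum>j\<in>Nb i. total_balls R B Dr Db h j)"

primrec polya_hist ::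
  "nat \<Rightarrow> (nat \<Rightarrow> nat set) \<Rightarrow> (nat \<Rightarrow> nat) \<Rightarrow> (nat \<Rightarrow> nat) \<Rightarrow> (nat \<Rightarrow> nat \<Rightarrow> real)
     \<Rightarrow> (nat \<Rightarrow> nat \<Rightarrow> real) \<Rightarrow> nat \<Rightarrow> (nat \<Rightarrow> bool) list pmf" where
  "polya_hist N Nb R B Dr Db 0 = return_pmf []"
| "polya_hist N Nb R B Dr Db (Suc n) =
     do { h \<leftarrow> polya_hist N Nb R B Dr Db n;
          z \<leftarrow> Pi_pmf {1..N} False (\<lambda>i. bernoulli_pmf (red_prob Nb R B Dr Db h i));
          return_pmf (h @ [z]) }"

end

theory Submission
  imports Defs
begin

text \<open>On the complete graph every node draws from the same super urn, so all nodes see the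
  global red fraction. When red and black draws add the same number of balls, the total
  number of balls grows deterministically, and the red fraction is a martingale: the expected
  number of red balls added at the next step is the current fraction times the (fixed)
  number of added balls. Its mean therefore stays at its initial value \<rho>, and the probability
  that a node draws red at time n is the mean red fraction after n - 1 steps.\<close>

lemma integral_bind_pmf_finite:
  fixes g :: "'b \<Rightarrow> real"
  assumes "finite (set_pmf p)" "\<And>x. x \<in> set_pmf p \<Longrightarrow> finite (set_pmf (f x))"
  shows "measure_pmf.expectation (p \<bind> f) g =
         measure_pmf.expectation p (\<lambda>x. measure_pmf.expectation (f x) g)"
  using assms
  by (subst pmf_expectation_bind[OF assms(1) _ subset_refl]) (auto simp: integral_measure_pmf)

lemma finite_set_Pi_pmf:
  "finite A \<Longrightarrow> finite (set_pmf (Pi_pmf A dflt (q :: 'a \<Rightarrow> 'b :: finite pmf)))"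
  by (subst set_Pi_pmf) auto

lemma expectation_Pi_pmf_component:
  fixes f :: "'b \<Rightarrow> real"
  assumes "finite A" "x \<in> A"
  shows "measure_pmf.expectation (Pi_pmf A dflt p) (\<lambda>z. f (z x)) = measure_pmf.expectation (p x) f"
proof -
  have "measure_pmf.expectation (Pi_pmf A dflt p) (\<lambda>z. f (z x)) =
        measure_pmf.expectation (map_pmf (\<lambda>z. z x) (Pi_pmf A dflt p)) f"
    by simp
  then show ?thesis
    using assms by (simp add: Pi_pmf_component)
qed

lemma finite_set_pmf_polya_hist: "finite (set_pmf (polya_hist N Nb R B Dr Db n))"
  by (induction n) (auto simp: set_bind_pmf finite_set_Pi_pmf)

lemma length_polya_hist:
  "h \<in> set_pmf (polya_hist N Nb R B Dr Db n) \<Longrightarrow> length h = n"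
  by (induction n arbitrary: h) (auto simp: set_bind_pmf)

lemma expectation_polya_hist_Suc:
  fixes g :: "(nat \<Rightarrow> bool) list \<Rightarrow> real"
  shows "measure_pmf.expectation (polya_hist N Nb R B Dr Db (Suc m)) g =
         measure_pmf.expectation (polya_hist N Nb R B Dr Db m)
           (\<lambda>h. measure_pmf.expectation
                  (Pi_pmf {1..N} False (\<lambda>i. bernoulli_pmf (red_prob Nb R B Dr Db h i)))
                  (\<lambda>z. g (h @ [z])))"
proof -
  let ?Z = "\<lambda>h. Pi_pmf {1..N} False (\<lambda>i. bernoulli_pmf (red_prob Nb R B Dr Db h i))"
  have "measure_pmf.expectation (polya_hist N Nb R B Dr Db (Suc m)) g =
        measure_pmf.expectation (polya_hist N Nb R B Dr Db m)
          (\<lambda>h. measure_pmf.expectation (?Z h \<bind> (\<lambda>z. return_pmf (h @ [z]))) g)"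
    unfolding polya_hist.simps
    by (rule integral_bind_pmf_finite)
       (auto simp: finite_set_pmf_polya_hist finite_set_Pi_pmf set_bind_pmf)
  also have "\<dots> = measure_pmf.expectation (polya_hist N Nb R B Dr Db m)
          (\<lambda>h. measure_pmf.expectation (?Z h) (\<lambda>z. g (h @ [z])))"
    by (subst integral_bind_pmf_finite) (simp_all add: finite_set_Pi_pmf)
  finally show ?thesis .
qed

lemma prob_polya_hist_last_draw:
  assumes "i \<in> {1..N}"
  shows "measure_pmf.prob (polya_hist N Nb R B Dr Db (Suc m)) {h. (h ! m) i = b} =
         measure_pmf.expectation (polya_hist N Nb R B Dr Db m)
           (\<lambda>h. pmf (bernoulli_pmf (red_prob Nb R B Dr Db h i)) b)"
proof -
  let ?Z = "\<lambda>h. Pi_pmf {1..N} False (\<lambda>i. bernoulli_pmf (red_prob Nb R B Dr Db h i))"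
  have draw: "measure_pmf.expectation (?Z h) (\<lambda>z. indicator {h. (h ! m) i = b} (h @ [z])) =
              pmf (bernoulli_pmf (red_prob Nb R B Dr Db h i)) b"
    if "h \<in> set_pmf (polya_hist N Nb R B Dr Db m)" for h
  proof -
    have "(\<lambda>z. indicator {h. (h ! m) i = b} (h @ [z])) = (indicator {z. z i = b} :: _ \<Rightarrow> real)"
      using length_polya_hist[OF that] by (auto simp: nth_append indicator_def)
    then have "measure_pmf.expectation (?Z h) (\<lambda>z. indicator {h. (h ! m) i = b} (h @ [z])) =
               measure_pmf.prob (map_pmf (\<lambda>z. z i) (?Z h)) {b}"
      by (simp add: vimage_def)
    also have "\<dots> = pmf (bernoulli_pmf (red_prob Nb R B Dr Db h i)) b"
      using assms by (simp add: Pi_pmf_component measure_pmf_single)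
    finally show ?thesis .
  qed
  have "measure_pmf.prob (polya_hist N Nb R B Dr Db (Suc m)) {h. (h ! m) i = b} =
        measure_pmf.expectation (polya_hist N Nb R B Dr Db (Suc m)) (indicator {h. (h ! m) i = b})"
    by simp
  also have "\<dots> = measure_pmf.expectation (polya_hist N Nb R B Dr Db m)
          (\<lambda>h. measure_pmf.expectation (?Z h) (\<lambda>z. indicator {h. (h ! m) i = b} (h @ [z])))"
    by (rule expectation_polya_hist_Suc)
  also have "\<dots> = measure_pmf.expectation (polya_hist N Nb R B Dr Db m)
                     (\<lambda>h. pmf (bernoulli_pmf (red_prob Nb R B Dr Db h i)) b)"
    by (intro integral_cong_AE AE_pmfI draw) auto
  finally show ?thesis .
qed

lemma red_balls_snoc:
  "red_balls R Dr (h @ [z]) j = red_balls R Dr h j + (if z j then Dr j (Suc (length h)) else 0)"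
  by (simp add: red_balls_def nth_append)

lemma total_balls_snoc:
  "total_balls R B Dr Db (h @ [z]) j =
   total_balls R B Dr Db h j + (if z j then Dr j (Suc (length h)) else Db j (Suc (length h)))"
  by (simp add: total_balls_def nth_append)

lemma red_balls_nonneg: "(\<And>j t. Dr j t \<ge> 0) \<Longrightarrow> red_balls R Dr h j \<ge> 0"
  unfolding red_balls_def by (intro add_nonneg_nonneg sum_nonneg) auto

lemma red_balls_le_total_balls:
  "(\<And>j t. Db j t \<ge> 0) \<Longrightarrow> red_balls R Dr h j \<le> total_balls R B Dr Db h j"
  unfolding red_balls_def total_balls_def by (intro add_mono sum_mono) auto

lemma total_balls_ge_initial:
  "(\<And>j t. Dr j t \<ge> 0) \<Longrightarrow> (\<And>j t. Db j t \<ge> 0) \<Longrightarrow>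
   total_balls R B Dr Db h j \<ge> real (R j + B j)"
  unfolding total_balls_def by (auto intro!: sum_nonneg)

definition red_fraction ::
  "nat \<Rightarrow> (nat \<Rightarrow> nat) \<Rightarrow> (nat \<Rightarrow> nat) \<Rightarrow> (nat \<Rightarrow> nat \<Rightarrow> real) \<Rightarrow> (nat \<Rightarrow> bool) list \<Rightarrow> real" where
  "red_fraction N R B D h =
     (\<Sum>j\<in>{1..N}. red_balls R D h j) / (\<Sum>j\<in>{1..N}. total_balls R B D D h j)"

lemma red_prob_complete_graph:
  "red_prob (\<lambda>_. {1..N}) R B D D h i = red_fraction N R B D h"
  by (simp add: red_prob_def red_fraction_def)

lemma red_fraction_Nil:
  "red_fraction N R B D [] = (\<Sum>k=1..N. real (R k)) / (\<Sum>k=1..N. real (R k + B k))"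
  by (simp add: red_fraction_def red_balls_def total_balls_def)

context
  fixes N :: nat and R B :: "nat \<Rightarrow> nat" and D :: "nat \<Rightarrow> nat \<Rightarrow> real"
  assumes N_pos: "N \<ge> 1"
    and R_pos: "\<forall>k\<in>{1..N}. R k > 0"
    and D_nonneg: "\<And>j t. D j t \<ge> 0"
begin

lemma total_balls_sum_pos: "(\<Sum>j\<in>{1..N}. total_balls R B D D h j) > 0"
proof -
  have "0 < (\<Sum>j\<in>{1..N}. real (R j + B j))"
    using N_pos R_pos by (intro sum_pos) (auto intro: add_pos_nonneg)
  also have "\<dots> \<le> (\<Sum>j\<in>{1..N}. total_balls R B D D h j)"
    by (intro sum_mono total_balls_ge_initial D_nonneg)
  finally show ?thesis .
qed

lemma red_fraction_bounds: "0 \<le> red_fraction N R B D h" "red_fraction N R B D h \<le> 1"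
  using total_balls_sum_pos[of h]
    sum_mono[of "{1..N}" "red_balls R D h" "total_balls R B D D h"]
    sum_nonneg[of "{1..N}" "red_balls R D h"]
  by (auto simp: red_fraction_def red_balls_nonneg red_balls_le_total_balls D_nonneg)

lemma expectation_red_fraction_snoc:
  "measure_pmf.expectation (Pi_pmf {1..N} False (\<lambda>_. bernoulli_pmf (red_fraction N R B D h)))
     (\<lambda>z. red_fraction N R B D (h @ [z])) = red_fraction N R B D h"
proof -
  define q where "q = red_fraction N R B D h"
  define S where "S = (\<Sum>j\<in>{1..N}. red_balls R D h j)"
  define T where "T = (\<Sum>j\<in>{1..N}. total_balls R B D D h j)"
  define d where "d = (\<Sum>j\<in>{1..N}. D j (Suc (length h)))"
  let ?Z = "Pi_pmf {1..N} False (\<lambda>_. bernoulli_pmf q)"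
  let ?added = "\<lambda>z. \<Sum>j\<in>{1..N}. if z j then D j (Suc (length h)) else 0"
  have T_pos: "T > 0" and d_nonneg: "d \<ge> 0" and q: "0 \<le> q" "q \<le> 1" "S = q * T"
    using total_balls_sum_pos[of h] red_fraction_bounds[of h]
    by (auto simp: T_def d_def q_def S_def red_fraction_def D_nonneg sum_nonneg)
  have int: "integrable ?Z f" for f :: "_ \<Rightarrow> real"
    by (simp add: integrable_measure_pmf_finite finite_set_Pi_pmf)
  have snoc: "red_fraction N R B D (h @ [z]) = (S + ?added z) / (T + d)" for z
    by (simp add: red_fraction_def red_balls_snoc total_balls_snoc sum.distrib S_def T_def d_def)
  have "measure_pmf.expectation ?Z ?added =
        (\<Sum>j\<in>{1..N}. measure_pmf.expectation ?Z (\<lambda>z. if z j then D j (Suc (length h)) else 0))"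
    by (rule Bochner_Integration.integral_sum) (rule int)
  also have "\<dots> = (\<Sum>j\<in>{1..N}. q * D j (Suc (length h)))"
  proof (rule sum.cong)
    fix j assume "j \<in> {1..N}"
    then have "measure_pmf.expectation ?Z (\<lambda>z. if z j then D j (Suc (length h)) else 0) =
               measure_pmf.expectation (bernoulli_pmf q) (\<lambda>b. if b then D j (Suc (length h)) else 0)"
      by (intro expectation_Pi_pmf_component) auto
    then show "measure_pmf.expectation ?Z (\<lambda>z. if z j then D j (Suc (length h)) else 0) =
               q * D j (Suc (length h))"
      using q by simp
  qed simp
  also have "\<dots> = q * d"
    by (simp add: d_def sum_distrib_left)
  finally have added: "measure_pmf.expectation ?Z ?added = q * d" .
  have "measure_pmf.expectation ?Z (\<lambda>z. red_fraction N R B D (h @ [z])) =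
        measure_pmf.expectation ?Z (\<lambda>z. S + ?added z) / (T + d)"
    unfolding snoc by simp
  also have "\<dots> = (S + q * d) / (T + d)"
    unfolding Bochner_Integration.integral_add[OF int int] added by simp
  also have "\<dots> = q"
    using T_pos d_nonneg q by (simp add: field_simps)
  finally show ?thesis by (simp add: q_def)
qed

lemma expectation_red_fraction:
  "measure_pmf.expectation (polya_hist N (\<lambda>_. {1..N}) R B D D n) (red_fraction N R B D) =
   red_fraction N R B D []"
proof (induction n)
  case (Suc n)
  then show ?case
    by (simp only: expectation_polya_hist_Suc red_prob_complete_graph expectation_red_fraction_snoc)
qed simp

end

theorem lemma1:
  fixes N :: nat and R B :: "nat \<Rightarrow> nat" and \<Delta> :: real
    and i n a :: nat
  assumes "N \<ge> 1"
    and "\<forall>k\<in>{1..N}. R k > 0"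
    and "\<forall>k\<in>{1..N}. B k > 0"
    and "\<Delta> > 0"
    and "i \<in> {1..N}" and "n \<ge> 1" and "a \<in> {0, 1}"
  shows "(let \<rho> = (\<Sum>k=1..N. real (R k)) / (\<Sum>k=1..N. real (R k + B k)) in
          measure_pmf.prob (polya_hist N (\<lambda>_. {1..N}) R B (\<lambda>_ _. \<Delta>) (\<lambda>_ _. \<Delta>) n)
             {h. (h ! (n - 1)) i = (a = 1)}
          = \<rho> ^ a * (1 - \<rho>) ^ (1 - a))"
proof -
  obtain m where n: "n = Suc m" using \<open>n \<ge> 1\<close> by (cases n) auto
  let ?P = "polya_hist N (\<lambda>_. {1..N}) R B (\<lambda>_ _. \<Delta>) (\<lambda>_ _. \<Delta>)"
  let ?q = "red_fraction N R B (\<lambda>_ _. \<Delta>)"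
  have q_bounds: "0 \<le> ?q h" "?q h \<le> 1" for h
    using red_fraction_bounds[OF assms(1,2)] \<open>\<Delta> > 0\<close> by auto
  have mean: "measure_pmf.expectation (?P m) ?q = ?q []"
    using expectation_red_fraction[OF assms(1,2)] \<open>\<Delta> > 0\<close> by auto
  have "measure_pmf.prob (?P n) {h. (h ! (n - 1)) i = (a = 1)} =
        measure_pmf.expectation (?P m) (\<lambda>h. pmf (bernoulli_pmf (?q h)) (a = 1))"
    by (simp only: n diff_Suc_1 prob_polya_hist_last_draw[OF \<open>i \<in> {1..N}\<close>]
        red_prob_complete_graph)
  also have "\<dots> = ?q [] ^ a * (1 - ?q []) ^ (1 - a)"
  proof (cases "a = 1")
    case True
    then show ?thesis using q_bounds mean by simp
  next
    case False
    then have "a = 0" using \<open>a \<in> {0, 1}\<close> by auto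
    have "integrable (?P m) f" for f :: "_ \<Rightarrow> real"
      by (simp add: integrable_measure_pmf_finite finite_set_pmf_polya_hist)
    then show ?thesis using \<open>a = 0\<close> q_bounds mean by simp
  qed
  finally show ?thesis by (simp add: red_fraction_Nil)
qed

end
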